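(* Let $n\ge2$, $1\le s\le\lfloor n/2\rfloor$, $0\le t\le\lfloor n/2\rfloor$. Let $E_0\subset\mathbb F_2^s$, $\overline{E_0}=\mathbb F_2^s\setminus E_0$, and $E_1=\overline{E_0}\times\mathbb F_2^t$. Let $\phi_0:E_0\to\mathbb F_2^{n-s}$ and $\phi_1:E_1\to\mathbb F_2^{n-s-t}$ be injective maps. For $X=(x_1,\dots,x_n)\in\mathbb F_2^n$ write $X_{(i,j)}=(x_i,\dots,x_j)$. Define $f:\mathbb F_2^n\to\mathbb F_2$ by $f(X)=\phi_0(X_{(1,s)})\cdot X_{(s+1,n)}$ if $X_{(1,s)}\in E_0$, and $f(X)=\phi_1(X_{(1,s+t)})\cdot X_{(s+t+1,n)}$ if $X_{(1,s+t)}\in E_1$. Let $T_0=\phi_0(E_0)$ and $T_1=\phi_1(E_1)$. Then: (a) if $t\ne0$ and $T_0\subset\mathbb F_2^t\times\overline{T_1}$, where $\overline{T_1}=\mathbb F_2^{n-s-t}\setminus T_1$, then $W_f(\omega)\in\{0,\pm2^{n-s},\pm2^{n-s-t}\}$ for all $\omega\in\mathbb F_2^n$; (b) if $t=0$, $T_0\cap T_1\ne\emptyset$ and $T_0\ne T_1$, then $W_f(\omega)\in\{0,\pm2^{n-s},\pm2^{n-s+1}\}$ for all $\omega\in\mathbb F_2^n$.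
   Context: $W_f(\omega)=\sum_{X\in\mathbb F_2^n}(-1)^{f(X)\oplus\omega\cdot X}$, with $\cdot$ the dot product over $\mathbb F_2$. *)

theory Defs
  imports Main
begin

text \<open>Vectors of F_2^k are modelled as boolean lists of length k (True = 1).
  Addition in F_2 is exclusive or, i.e. inequality of booleans.\<close>

definition vecs :: "nat \<Rightarrow> bool list set" where
  "vecs k = {xs. length xs = k}"

definition dotp :: "bool list \<Rightarrow> bool list \<Rightarrow> bool" where
  "dotp xs ys = odd (card {i. i < length xs \<and> i < length ys \<and> xs ! i \<and> ys ! i})"

definition walsh :: "nat \<Rightarrow> (bool list \<Rightarrow> bool) \<Rightarrow> bool list \<Rightarrow> int" where
  "walsh n f \<omega> = (\<Sum>X\<in>vecs n. (-1::int) ^ (if f X \<noteq> dotp \<omega> X then 1 else 0))"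

definition E1set :: "nat \<Rightarrow> nat \<Rightarrow> bool list set \<Rightarrow> bool list set" where
  "E1set s t E0 = {u @ v | u v. u \<in> vecs s - E0 \<and> v \<in> vecs t}"

definition fconstr :: "nat \<Rightarrow> nat \<Rightarrow> bool list set \<Rightarrow> (bool list \<Rightarrow> bool list)
    \<Rightarrow> (bool list \<Rightarrow> bool list) \<Rightarrow> bool list \<Rightarrow> bool" where
  "fconstr s t E0 \<phi>0 \<phi>1 X =
     (if take s X \<in> E0 then dotp (\<phi>0 (take s X)) (drop s X)
      else dotp (\<phi>1 (take (s + t) X)) (drop (s + t) X))"

end

theory Submission
  imports Defs
begin

text \<open>Split X = u @ y with u of length s. On a block u \<in> E0 (resp. a block w \<in> E1 of length s+t)
  f is the linear function y \<mapsto> \<phi>0 u \<cdot> y (resp. \<phi>1 w \<cdot> y), so by orthogonality of characters the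
  inner sum over y vanishes unless \<phi>0 u (resp. \<phi>1 w) equals the matching tail of \<omega>. Injectivity
  of \<phi>0 and \<phi>1 leaves at most one surviving block of each kind, hence
  W_f(\<omega>) = 2^(n-s) e0 + 2^(n-s-t) e1 with e0, e1 \<in> {-1,0,1}. In (a) the condition on T0 forces
  e1 = 0 whenever e0 \<noteq> 0; in (b) both powers coincide.\<close>

definition bool_sign :: "bool \<Rightarrow> int" where
  "bool_sign b = (if b then -1 else 1)"

lemma power_minus_one_if_eq_bool_sign: "(-1::int) ^ (if P then 1 else 0) = bool_sign P"
  by (simp add: bool_sign_def)

lemma bool_sign_xor: "bool_sign (A \<noteq> B) = bool_sign A * bool_sign B"
  by (auto simp: bool_sign_def)

lemma finite_vecs: "finite (vecs k)"
  using finite_lists_length_eq[of "UNIV::bool set" k] by (simp add: vecs_def)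

lemma dotp_Nil: "dotp [] ys = False"
  by (simp add: dotp_def)

lemma dotp_Cons: "dotp (p # ps) (q # qs) = ((p \<and> q) \<noteq> dotp ps qs)"
proof -
  let ?S = "{i. i < length ps \<and> i < length qs \<and> ps ! i \<and> qs ! i}"
  have "{i. i < length (p # ps) \<and> i < length (q # qs) \<and> (p # ps) ! i \<and> (q # qs) ! i}
      = (if p \<and> q then insert 0 (Suc ` ?S) else Suc ` ?S)"
    by (rule set_eqI) (auto simp: nth_Cons split: nat.splits)
  moreover have "card (Suc ` ?S) = card ?S"
    by (simp add: card_image)
  ultimately show ?thesis
    by (auto simp: dotp_def card_insert_if)
qed

lemma dotp_append: "length a = length x \<Longrightarrow> dotp (a @ b) (x @ y) = (dotp a x \<noteq> dotp b y)"
proof (induction a arbitrary: x)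
  case Nil
  then show ?case by (simp add: dotp_Nil)
next
  case (Cons p a)
  then obtain q x' where "x = q # x'" "length a = length x'"
    by (cases x) auto
  with Cons show ?case by (auto simp: dotp_Cons)
qed

lemma sum_vecs_add: "(\<Sum>X\<in>vecs (k + m). g X) = (\<Sum>u\<in>vecs k. \<Sum>y\<in>vecs m. g (u @ y))"
proof -
  have "vecs (k + m) = (\<lambda>(u, y). u @ y) ` (vecs k \<times> vecs m)"
  proof (intro equalityI subsetI)
    fix X assume "X \<in> vecs (k + m)"
    then have "X = (\<lambda>(u, y). u @ y) (take k X, drop k X)" "(take k X, drop k X) \<in> vecs k \<times> vecs m"
      by (auto simp: vecs_def)
    then show "X \<in> (\<lambda>(u, y). u @ y) ` (vecs k \<times> vecs m)" by blast
  qed (auto simp: vecs_def)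
  moreover have "inj_on (\<lambda>(u, y). u @ y) (vecs k \<times> vecs m)"
    by (auto simp: inj_on_def vecs_def)
  ultimately have "(\<Sum>X\<in>vecs (k + m). g X) = (\<Sum>(u, y)\<in>vecs k \<times> vecs m. g (u @ y))"
    by (simp add: sum.reindex case_prod_beta')
  then show ?thesis
    by (simp add: sum.cartesian_product)
qed

lemma sum_vecs_Suc: "(\<Sum>y\<in>vecs (Suc m). g y) = (\<Sum>y\<in>vecs m. g (True # y) + g (False # y))"
proof -
  have "vecs (Suc m) = Cons True ` vecs m \<union> Cons False ` vecs m"
    by (auto simp: vecs_def image_iff length_Suc_conv)
  then have "(\<Sum>y\<in>vecs (Suc m). g y) = (\<Sum>y\<in>Cons True ` vecs m. g y) + (\<Sum>y\<in>Cons False ` vecs m. g y)"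
    by (simp only:) (rule sum.union_disjoint, auto simp: finite_vecs)
  then show ?thesis
    by (simp add: sum.reindex sum.distrib)
qed

lemma sum_bool_sign_dotp_orthogonal:
  "p \<in> vecs m \<Longrightarrow> q \<in> vecs m \<Longrightarrow>
   (\<Sum>y\<in>vecs m. bool_sign (dotp p y \<noteq> dotp q y)) = (if p = q then 2 ^ m else 0)"
proof (induction m arbitrary: p q)
  case 0
  then show ?case by (simp add: vecs_def dotp_Nil bool_sign_def)
next
  case (Suc m)
  obtain a p' where p: "p = a # p'" "p' \<in> vecs m"
    using Suc.prems by (cases p) (auto simp: vecs_def)
  obtain b q' where q: "q = b # q'" "q' \<in> vecs m"
    using Suc.prems by (cases q) (auto simp: vecs_def)
  let ?h = "\<lambda>y. bool_sign (dotp p' y \<noteq> dotp q' y)"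
  have "(\<Sum>y\<in>vecs (Suc m). bool_sign (dotp p y \<noteq> dotp q y))
      = (\<Sum>y\<in>vecs m. (bool_sign (a \<noteq> b) + 1) * ?h y)"
    unfolding sum_vecs_Suc
    by (intro sum.cong) (auto simp: p q dotp_Cons bool_sign_def)
  also have "\<dots> = (bool_sign (a \<noteq> b) + 1) * (if p' = q' then 2 ^ m else 0)"
    unfolding sum_distrib_left[symmetric] Suc.IH[OF p(2) q(2)] ..
  finally show ?case
    by (auto simp: p q bool_sign_def)
qed

lemma sum_bool_sign_dotp_block:
  assumes "length a = length u" "p \<in> vecs m" "\<beta> \<in> vecs m"
  shows "(\<Sum>y\<in>vecs m. bool_sign (dotp p y \<noteq> dotp (a @ \<beta>) (u @ y)))
       = 2 ^ m * (if p = \<beta> then bool_sign (dotp a u) else 0)"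
proof -
  have "(\<Sum>y\<in>vecs m. bool_sign (dotp p y \<noteq> dotp (a @ \<beta>) (u @ y)))
      = (\<Sum>y\<in>vecs m. bool_sign (dotp a u) * bool_sign (dotp p y \<noteq> dotp \<beta> y))"
    using assms(1) by (intro sum.cong) (auto simp: dotp_append bool_sign_def)
  also have "\<dots> = bool_sign (dotp a u) * (if p = \<beta> then 2 ^ m else 0)"
    unfolding sum_distrib_left[symmetric] sum_bool_sign_dotp_orthogonal[OF assms(2,3)] ..
  finally show ?thesis by simp
qed

lemma sum_inj_on_delta_bool_sign:
  assumes "finite A" "inj_on \<phi> A"
  shows "(\<Sum>x\<in>A. if \<phi> x = \<beta> then bool_sign (P x) else 0) \<in> (if \<beta> \<in> \<phi> ` A then {-1, 1} else {0})"
proof (cases "\<beta> \<in> \<phi> ` A")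
  case True
  then obtain x0 where x0: "x0 \<in> A" "\<phi> x0 = \<beta>" by blast
  have "(\<Sum>x\<in>A. if \<phi> x = \<beta> then bool_sign (P x) else 0) = (\<Sum>x\<in>A. if x = x0 then bool_sign (P x) else 0)"
    using x0 assms(2) by (intro sum.cong) (auto dest: inj_onD)
  with True x0 assms(1) show ?thesis
    by (simp add: bool_sign_def)
qed (auto intro!: sum.neutral)

lemma sum_E1set:
  assumes "E0 \<subseteq> vecs s"
  shows "(\<Sum>u\<in>vecs s - E0. \<Sum>v\<in>vecs t. g (u @ v)) = (\<Sum>w\<in>E1set s t E0. g w)"
proof -
  have "E1set s t E0 = (\<lambda>(u, v). u @ v) ` ((vecs s - E0) \<times> vecs t)"
    by (auto simp: E1set_def)
  moreover have "inj_on (\<lambda>(u, v). u @ v) ((vecs s - E0) \<times> vecs t)"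
    by (auto simp: inj_on_def vecs_def)
  ultimately show ?thesis
    by (simp add: sum.reindex sum.cartesian_product case_prod_beta')
qed

lemma fconstr_append_E0:
  "u \<in> E0 \<Longrightarrow> length u = s \<Longrightarrow> fconstr s t E0 \<phi>0 \<phi>1 (u @ y) = dotp (\<phi>0 u) y"
  by (simp add: fconstr_def)

lemma fconstr_append_E1set:
  "w \<in> E1set s t E0 \<Longrightarrow> fconstr s t E0 \<phi>0 \<phi>1 (w @ z) = dotp (\<phi>1 w) z"
  by (auto simp: fconstr_def E1set_def vecs_def)

lemma walsh_fconstr_eq:
  assumes "s + t \<le> n" and E0: "E0 \<subseteq> vecs s"
    and im0: "\<phi>0 ` E0 \<subseteq> vecs (n - s)" and im1: "\<phi>1 ` E1set s t E0 \<subseteq> vecs (n - s - t)"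
    and \<omega>: "\<omega> \<in> vecs n"
  shows "walsh n (fconstr s t E0 \<phi>0 \<phi>1) \<omega> =
      2 ^ (n - s) * (\<Sum>u\<in>E0. if \<phi>0 u = drop s \<omega> then bool_sign (dotp (take s \<omega>) u) else 0)
    + 2 ^ (n - s - t) * (\<Sum>w\<in>E1set s t E0.
        if \<phi>1 w = drop (s + t) \<omega> then bool_sign (dotp (take (s + t) \<omega>) w) else 0)"
proof -
  define m where "m = n - s"
  define k where "k = n - s - t"
  define g where "g X = bool_sign (fconstr s t E0 \<phi>0 \<phi>1 X \<noteq> dotp \<omega> X)" for X
  have n: "n = s + m" and m: "m = t + k"
    using assms(1) by (auto simp: m_def k_def)
  have drop_\<omega>: "drop s \<omega> \<in> vecs m" "drop (s + t) \<omega> \<in> vecs k"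
    using \<omega> by (auto simp: vecs_def m_def k_def)
  have "walsh n (fconstr s t E0 \<phi>0 \<phi>1) \<omega> = (\<Sum>u\<in>vecs s. \<Sum>y\<in>vecs m. g (u @ y))"
    unfolding walsh_def g_def n sum_vecs_add power_minus_one_if_eq_bool_sign ..
  also have "\<dots> = (\<Sum>u\<in>E0. \<Sum>y\<in>vecs m. g (u @ y)) + (\<Sum>w\<in>E1set s t E0. \<Sum>z\<in>vecs k. g (w @ z))"
    unfolding sum.subset_diff[OF E0 finite_vecs] m sum_vecs_add sum_E1set[OF E0, symmetric]
    by (simp add: add.commute)
  also have "(\<Sum>u\<in>E0. \<Sum>y\<in>vecs m. g (u @ y))
      = (\<Sum>u\<in>E0. 2 ^ m * (if \<phi>0 u = drop s \<omega> then bool_sign (dotp (take s \<omega>) u) else 0))"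
  proof (rule sum.cong[OF refl])
    fix u assume u: "u \<in> E0"
    then have "length u = s" "\<phi>0 u \<in> vecs m"
      using E0 im0 by (auto simp: vecs_def m_def)
    with u \<omega> show "(\<Sum>y\<in>vecs m. g (u @ y)) = 2 ^ m * (if \<phi>0 u = drop s \<omega> then bool_sign (dotp (take s \<omega>) u) else 0)"
      using sum_bool_sign_dotp_block[of "take s \<omega>" u "\<phi>0 u" m "drop s \<omega>"] drop_\<omega>
      by (simp add: g_def fconstr_append_E0 vecs_def n)
  qed
  also have "(\<Sum>w\<in>E1set s t E0. \<Sum>z\<in>vecs k. g (w @ z))
      = (\<Sum>w\<in>E1set s t E0. 2 ^ k * (if \<phi>1 w = drop (s + t) \<omega> then bool_sign (dotp (take (s + t) \<omega>) w) else 0))"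
  proof (rule sum.cong[OF refl])
    fix w assume w: "w \<in> E1set s t E0"
    then have "length w = s + t" "\<phi>1 w \<in> vecs k"
      using im1 by (auto simp: E1set_def vecs_def k_def)
    with w \<omega> show "(\<Sum>z\<in>vecs k. g (w @ z)) = 2 ^ k * (if \<phi>1 w = drop (s + t) \<omega> then bool_sign (dotp (take (s + t) \<omega>) w) else 0)"
      using sum_bool_sign_dotp_block[of "take (s + t) \<omega>" w "\<phi>1 w" k "drop (s + t) \<omega>"] drop_\<omega>
      by (simp add: g_def fconstr_append_E1set vecs_def n m)
  qed
  finally show ?thesis
    by (simp add: sum_distrib_left m_def k_def)
qed

lemma walsh_fconstr_signed_sum:
  assumes "s + t \<le> n" "E0 \<subseteq> vecs s"
    and "inj_on \<phi>0 E0" "\<phi>0 ` E0 \<subseteq> vecs (n - s)"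
    and "inj_on \<phi>1 (E1set s t E0)" "\<phi>1 ` E1set s t E0 \<subseteq> vecs (n - s - t)"
    and "\<omega> \<in> vecs n"
  obtains e0 e1 :: int
  where "walsh n (fconstr s t E0 \<phi>0 \<phi>1) \<omega> = 2 ^ (n - s) * e0 + 2 ^ (n - s - t) * e1"
    and "e0 \<in> (if drop s \<omega> \<in> \<phi>0 ` E0 then {-1, 1} else {0})"
    and "e1 \<in> (if drop (s + t) \<omega> \<in> \<phi>1 ` E1set s t E0 then {-1, 1} else {0})"
proof -
  have "finite E0"
    using assms(2) finite_subset finite_vecs by blast
  moreover have "finite (E1set s t E0)"
    by (rule finite_subset[OF _ finite_vecs[of "s + t"]]) (auto simp: E1set_def vecs_def)
  ultimately show ?thesis
    using that walsh_fconstr_eq[OF assms(1,2,4,6,7)]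
      sum_inj_on_delta_bool_sign[OF _ assms(3)] sum_inj_on_delta_bool_sign[OF _ assms(5)]
    by blast
qed

lemma walsh_fconstr_values_tails_avoid_T1:
  assumes "s + t \<le> n" "E0 \<subseteq> vecs s"
    and "inj_on \<phi>0 E0" "\<phi>0 ` E0 \<subseteq> vecs (n - s)"
    and "inj_on \<phi>1 (E1set s t E0)" "\<phi>1 ` E1set s t E0 \<subseteq> vecs (n - s - t)"
    and T0: "\<phi>0 ` E0 \<subseteq> {a @ b | a b. a \<in> vecs t \<and> b \<in> vecs (n - s - t) - \<phi>1 ` E1set s t E0}"
    and "\<omega> \<in> vecs n"
  shows "walsh n (fconstr s t E0 \<phi>0 \<phi>1) \<omega> \<in>
    {0, 2 ^ (n - s), - (2 ^ (n - s)), 2 ^ (n - s - t), - (2 ^ (n - s - t))}"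
proof -
  obtain e0 e1 where W: "walsh n (fconstr s t E0 \<phi>0 \<phi>1) \<omega> = 2 ^ (n - s) * e0 + 2 ^ (n - s - t) * e1"
    and e0: "e0 \<in> (if drop s \<omega> \<in> \<phi>0 ` E0 then {-1, 1} else {0})"
    and e1: "e1 \<in> (if drop (s + t) \<omega> \<in> \<phi>1 ` E1set s t E0 then {-1, 1} else {0})"
    using walsh_fconstr_signed_sum[OF assms(1-6,8)] .
  show ?thesis
  proof (cases "drop s \<omega> \<in> \<phi>0 ` E0")
    case True
    then obtain a b where "drop s \<omega> = a @ b" "a \<in> vecs t" "b \<notin> \<phi>1 ` E1set s t E0"
      using T0 by blast
    moreover have "drop (s + t) \<omega> = drop t (drop s \<omega>)"
      by (simp add: add.commute)
    ultimately have "drop (s + t) \<omega> \<notin> \<phi>1 ` E1set s t E0"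
      by (simp add: vecs_def)
    with e1 have "e1 = 0"
      by simp
    with W e0 True show ?thesis by auto
  next
    case False
    with W e0 e1 show ?thesis by (auto split: if_splits)
  qed
qed

lemma walsh_fconstr_values_t0:
  assumes "s \<le> n" "E0 \<subseteq> vecs s"
    and "inj_on \<phi>0 E0" "\<phi>0 ` E0 \<subseteq> vecs (n - s)"
    and "inj_on \<phi>1 (E1set s 0 E0)" "\<phi>1 ` E1set s 0 E0 \<subseteq> vecs (n - s)"
    and "\<omega> \<in> vecs n"
  shows "walsh n (fconstr s 0 E0 \<phi>0 \<phi>1) \<omega> \<in>
    {0, 2 ^ (n - s), - (2 ^ (n - s)), 2 ^ (n - s + 1), - (2 ^ (n - s + 1))}"
proof -
  obtain e0 e1 where W: "walsh n (fconstr s 0 E0 \<phi>0 \<phi>1) \<omega> = 2 ^ (n - s) * e0 + 2 ^ (n - s) * e1"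
    and "e0 \<in> (if drop s \<omega> \<in> \<phi>0 ` E0 then {-1, 1} else {0})"
    and "e1 \<in> (if drop s \<omega> \<in> \<phi>1 ` E1set s 0 E0 then {-1, 1} else {0})"
    using walsh_fconstr_signed_sum[of s 0 n, simplified, OF assms] .
  then have "e0 \<in> {-1, 0, 1}" "e1 \<in> {-1, 0, 1}"
    by (auto split: if_splits)
  with W show ?thesis
    by auto
qed

text \<open>Only the inclusions in the set of values are claimed.\<close>

theorem mainTheorem10:
  fixes n s t :: nat and E0 :: "bool list set" and \<phi>0 \<phi>1 :: "bool list \<Rightarrow> bool list"
  assumes "n \<ge> 2" and "1 \<le> s" and "s \<le> n div 2" and "t \<le> n div 2"
    and "E0 \<subseteq> vecs s"
    and "inj_on \<phi>0 E0" and "\<phi>0 ` E0 \<subseteq> vecs (n - s)"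
    and "inj_on \<phi>1 (E1set s t E0)" and "\<phi>1 ` (E1set s t E0) \<subseteq> vecs (n - s - t)"
  shows "(t \<noteq> 0 \<and>
           \<phi>0 ` E0 \<subseteq> {a @ b | a b. a \<in> vecs t \<and> b \<in> vecs (n - s - t) - \<phi>1 ` (E1set s t E0)}
          \<longrightarrow> (\<forall>\<omega>\<in>vecs n. walsh n (fconstr s t E0 \<phi>0 \<phi>1) \<omega> \<in>
                 {0, 2 ^ (n - s), - (2 ^ (n - s)), 2 ^ (n - s - t), - (2 ^ (n - s - t))}))
       \<and> (t = 0 \<and> \<phi>0 ` E0 \<inter> \<phi>1 ` (E1set s t E0) \<noteq> {} \<and> \<phi>0 ` E0 \<noteq> \<phi>1 ` (E1set s t E0)
          \<longrightarrow> (\<forall>\<omega>\<in>vecs n. walsh n (fconstr s t E0 \<phi>0 \<phi>1) \<omega> \<in>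
                 {0, 2 ^ (n - s), - (2 ^ (n - s)), 2 ^ (n - s + 1), - (2 ^ (n - s + 1))}))"
proof (intro conjI impI ballI)
  have "s + t \<le> n"
    using assms(3,4) by linarith
  fix \<omega> assume "\<omega> \<in> vecs n"
  {
    assume "t \<noteq> 0 \<and> \<phi>0 ` E0 \<subseteq> {a @ b | a b. a \<in> vecs t \<and> b \<in> vecs (n - s - t) - \<phi>1 ` E1set s t E0}"
    then show "walsh n (fconstr s t E0 \<phi>0 \<phi>1) \<omega> \<in>
        {0, 2 ^ (n - s), - (2 ^ (n - s)), 2 ^ (n - s - t), - (2 ^ (n - s - t))}"
      using walsh_fconstr_values_tails_avoid_T1[OF \<open>s + t \<le> n\<close> assms(5-9) _ \<open>\<omega> \<in> vecs n\<close>]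
      by (elim conjE)
  }
  {
    assume "t = 0 \<and> \<phi>0 ` E0 \<inter> \<phi>1 ` E1set s t E0 \<noteq> {} \<and> \<phi>0 ` E0 \<noteq> \<phi>1 ` E1set s t E0"
    then have "t = 0" ..
    with \<open>s + t \<le> n\<close> \<open>\<omega> \<in> vecs n\<close> assms(5-9)
    show "walsh n (fconstr s t E0 \<phi>0 \<phi>1) \<omega> \<in>
        {0, 2 ^ (n - s), - (2 ^ (n - s)), 2 ^ (n - s + 1), - (2 ^ (n - s + 1))}"
      using walsh_fconstr_values_t0[of s n E0 \<phi>0 \<phi>1 \<omega>] by simp
  }
qed

end
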